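(* Let $P$ and $Q$ be finite posets and let $P+Q$ be their disjoint union, labeled by a bijection $\omega:P+Q\to[n]$, where $n=|P+Q|$ and $p=|P|$. Fix $s\in P$ such that $\omega(s)>\omega(t)$ for all $t\in Q$. Then $$(1-q^n)\,G_{P+Q;s}(q)=(1-q^p)\,G_{P;s}(q)\,G_Q(q).$$
   Context: $\mathbb{N}=\{0,1,2,\dots\}$. For a poset $R$ with an injective labeling $\omega_R:R\to\mathbb{Z}$, an $(R,\omega_R)$-partition is a map $f:R\to\mathbb{N}$ with $f(x)\ge f(y)$ whenever $x\le y$, and $f(x)>f(y)$ whenever $x\le y$ and $\omega_R(x)>\omega_R(y)$; for $s\in R$, an $(R,\omega_R;s)$-partition is an $(R,\omega_R)$-partition with $f(s)\le f(t)$ for all $t\in R$ and such that $f(s)=f(t)$, $t\ne s$, implies $\omega_R(s)>\omega_R(t)$. The size of $f$ is $\sum_{t\in R}f(t)$. $G_{P+Q;s}(q)$ is the generating function (by size) of $(P+Q,\omega;s)$-partitions; $G_{P;s}(q)$ that of $(P,\omega|_P;s)$-partitions; $G_Q(q)$ that of $(Q,\omega|_Q)$-partitions. *)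

theory Defs
  imports "HOL-Computational_Algebra.Formal_Power_Series"
begin

text \<open>A labeled poset is given by a carrier R, an order relation le (a set of pairs,
  le x y meaning x \<le> y) and an injective labeling w into the integers.
  Maps f : R \<rightarrow> nat are represented as functions 'a \<Rightarrow> nat that vanish outside R.\<close>

definition RP_partition :: "'a set \<Rightarrow> ('a \<times> 'a) set \<Rightarrow> ('a \<Rightarrow> int) \<Rightarrow> ('a \<Rightarrow> nat) \<Rightarrow> bool" where
  "RP_partition R le w f \<longleftrightarrow>
     (\<forall>x. x \<notin> R \<longrightarrow> f x = 0) \<and>
     (\<forall>x\<in>R. \<forall>y\<in>R. (x, y) \<in> le \<longrightarrow> f x \<ge> f y) \<and>
     (\<forall>x\<in>R. \<forall>y\<in>R. (x, y) \<in> le \<and> w x > w y \<longrightarrow> f x > f y)"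

definition RPs_partition :: "'a set \<Rightarrow> ('a \<times> 'a) set \<Rightarrow> ('a \<Rightarrow> int) \<Rightarrow> 'a \<Rightarrow> ('a \<Rightarrow> nat) \<Rightarrow> bool" where
  "RPs_partition R le w s f \<longleftrightarrow>
     RP_partition R le w f \<and>
     (\<forall>t\<in>R. f s \<le> f t) \<and>
     (\<forall>t\<in>R. f s = f t \<and> t \<noteq> s \<longrightarrow> w s > w t)"

definition size_gf :: "'a set \<Rightarrow> (('a \<Rightarrow> nat) \<Rightarrow> bool) \<Rightarrow> int fps" where
  "size_gf R Pred = Abs_fps (\<lambda>k. int (card {f. Pred f \<and> (\<Sum>t\<in>R. f t) = k}))"

definition G_gf :: "'a set \<Rightarrow> ('a \<times> 'a) set \<Rightarrow> ('a \<Rightarrow> int) \<Rightarrow> int fps" where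
  "G_gf R le w = size_gf R (RP_partition R le w)"

definition Gs_gf :: "'a set \<Rightarrow> ('a \<times> 'a) set \<Rightarrow> ('a \<Rightarrow> int) \<Rightarrow> 'a \<Rightarrow> int fps" where
  "Gs_gf R le w s = size_gf R (RPs_partition R le w s)"

end

theory Submission
  imports Defs
begin

text \<open>Split the (P+Q;s)-partitions f according to whether f s = 0. Those with f s > 0 are
  exactly the (P+Q;s)-partitions raised by one on every element, so they contribute
  q^n G_{P+Q;s}, and (1 - q^n) G_{P+Q;s} counts those with f s = 0; likewise for P alone.
  A (P+Q;s)-partition with f s = 0 is the same as a (P;s)-partition vanishing at s together
  with an arbitrary Q-partition: minimality at s is automatic, and ties f t = 0 = f s with
  t in Q are allowed because \<omega> s > \<omega> t.\<close>

definition restrict_zero :: "'a set \<Rightarrow> ('a \<Rightarrow> nat) \<Rightarrow> 'a \<Rightarrow> nat" where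
  "restrict_zero A f = (\<lambda>x. if x \<in> A then f x else 0)"

definition shift_up :: "'a set \<Rightarrow> ('a \<Rightarrow> nat) \<Rightarrow> 'a \<Rightarrow> nat" where
  "shift_up A g = restrict_zero A (\<lambda>x. g x + 1)"

lemma sum_restrict_zero: "sum (restrict_zero A f) A = sum f A"
  by (simp add: restrict_zero_def)

lemma finite_size_level:
  fixes Pr :: "('a \<Rightarrow> nat) \<Rightarrow> bool"
  assumes "finite R" and "\<And>f x. Pr f \<Longrightarrow> x \<notin> R \<Longrightarrow> f x = 0"
  shows "finite {f. Pr f \<and> sum f R = k}"
proof (rule finite_subset)
  show "{f. Pr f \<and> sum f R = k} \<subseteq> restrict_zero R ` PiE R (\<lambda>_. {..k})"
  proof
    fix f assume f: "f \<in> {f. Pr f \<and> sum f R = k}"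
    then have "restrict f R \<in> PiE R (\<lambda>_. {..k})"
      using member_le_sum[of _ R f] assms(1) by auto
    moreover have "f = restrict_zero R (restrict f R)"
      using f assms(2) by (auto simp: restrict_zero_def)
    ultimately show "f \<in> restrict_zero R ` PiE R (\<lambda>_. {..k})" by blast
  qed
  show "finite (restrict_zero R ` PiE R (\<lambda>_. {..k}))"
    using assms(1) by (simp add: finite_PiE)
qed

lemma size_gf_split:
  assumes "finite R" and "\<And>f x. Pr f \<Longrightarrow> x \<notin> R \<Longrightarrow> f x = 0"
  shows "size_gf R Pr = size_gf R (\<lambda>f. Pr f \<and> C f) + size_gf R (\<lambda>f. Pr f \<and> \<not> C f)"
proof (rule fps_ext)
  fix k
  have "{f. Pr f \<and> sum f R = k}
      = {f. (Pr f \<and> C f) \<and> sum f R = k} \<union> {f. (Pr f \<and> \<not> C f) \<and> sum f R = k}"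
    by auto
  moreover have "finite {f. (Pr f \<and> D f) \<and> sum f R = k}" for D
    using finite_size_level[OF assms(1), of "\<lambda>f. Pr f \<and> D f"] assms(2) by blast
  ultimately have "card {f. Pr f \<and> sum f R = k}
      = card {f. (Pr f \<and> C f) \<and> sum f R = k} + card {f. (Pr f \<and> \<not> C f) \<and> sum f R = k}"
    by (simp add: card_Un_disjoint disjoint_iff)
  then show "fps_nth (size_gf R Pr) k
      = fps_nth (size_gf R (\<lambda>f. Pr f \<and> C f) + size_gf R (\<lambda>f. Pr f \<and> \<not> C f)) k"
    by (simp add: size_gf_def)
qed

lemma size_gf_shift_up:
  assumes "finite R" and vanish: "\<And>g x. Pr g \<Longrightarrow> x \<notin> R \<Longrightarrow> g x = 0"
  shows "size_gf R (\<lambda>f. f \<in> shift_up R ` Collect Pr) = fps_X ^ card R * size_gf R Pr"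
proof (rule fps_ext)
  fix k
  have sum_shift: "sum (shift_up R g) R = sum g R + card R" for g
    using assms(1) by (simp add: shift_up_def restrict_zero_def sum_Suc)
  have inj: "inj_on (shift_up R) (Collect Pr)"
  proof (rule inj_onI)
    fix g h assume g: "g \<in> Collect Pr" and h: "h \<in> Collect Pr"
      and eq: "shift_up R g = shift_up R h"
    show "g = h"
    proof
      fix x
      show "g x = h x"
        using fun_cong[OF eq, of x] vanish[of g x] vanish[of h x] g h
        by (auto simp: shift_up_def restrict_zero_def split: if_splits)
    qed
  qed
  have "{f. f \<in> shift_up R ` Collect Pr \<and> sum f R = k}
      = shift_up R ` {g. Pr g \<and> sum g R + card R = k}"
    by (auto simp: sum_shift)
  also have "card \<dots> = card {g. Pr g \<and> sum g R + card R = k}"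
    by (rule card_image, rule inj_on_subset[OF inj]) auto
  also have "\<dots> = (if k < card R then 0 else card {g. Pr g \<and> sum g R = k - card R})"
    by (cases "k < card R") (auto intro!: arg_cong[where f = card])
  finally show "fps_nth (size_gf R (\<lambda>f. f \<in> shift_up R ` Collect Pr)) k
      = fps_nth (fps_X ^ card R * size_gf R Pr) k"
    by (simp add: size_gf_def fps_X_power_mult_nth)
qed

lemma size_gf_disjoint_union:
  assumes "finite A" "finite B" "A \<inter> B = {}"
    and vanish_A: "\<And>g x. PA g \<Longrightarrow> x \<notin> A \<Longrightarrow> g x = 0"
    and vanish_B: "\<And>h x. PB h \<Longrightarrow> x \<notin> B \<Longrightarrow> h x = 0"
    and PAB_iff: "\<And>f. PAB f \<longleftrightarrow>
      PA (restrict_zero A f) \<and> PB (restrict_zero B f) \<and> (\<forall>x. x \<notin> A \<union> B \<longrightarrow> f x = 0)"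
  shows "size_gf (A \<union> B) PAB = size_gf A PA * size_gf B PB"
proof (rule fps_ext)
  fix k
  define LA where "LA i = {g. PA g \<and> sum g A = i}" for i
  define LB where "LB j = {h. PB h \<and> sum h B = j}" for j
  have finite_LA: "finite (LA i)" for i
    unfolding LA_def by (rule finite_size_level[OF assms(1)]) (rule vanish_A)
  have finite_LB: "finite (LB j)" for j
    unfolding LB_def by (rule finite_size_level[OF assms(2)]) (rule vanish_B)
  let ?S = "{f. PAB f \<and> sum f (A \<union> B) = k}"
  let ?T = "SIGMA i:{0..k}. LA i \<times> LB (k - i)"
  have sum_union: "sum f (A \<union> B) = sum (restrict_zero A f) A + sum (restrict_zero B f) B" for f
    using assms(1-3) by (simp add: sum.union_disjoint sum_restrict_zero)
  \<comment> \<open>Pointwise addition merges g and h, since they vanish off the disjoint sets A and B.\<close>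
  have "bij_betw (\<lambda>f. (sum f A, restrict_zero A f, restrict_zero B f)) ?S ?T"
  proof (rule bij_betw_byWitness[where f' = "\<lambda>(i, g, h) x. g x + h x"])
    show "\<forall>f\<in>?S. (\<lambda>(i, g, h) x. g x + h x) (sum f A, restrict_zero A f, restrict_zero B f) = f"
      using assms(3) PAB_iff by (auto simp: fun_eq_iff restrict_zero_def)
    show "\<forall>t\<in>?T. (\<lambda>f. (sum f A, restrict_zero A f, restrict_zero B f))
        ((\<lambda>(i, g, h) x. g x + h x) t) = t"
      using assms(3) vanish_A vanish_B
      by (auto simp: LA_def LB_def fun_eq_iff restrict_zero_def intro!: sum.cong) blast+
    show "(\<lambda>f. (sum f A, restrict_zero A f, restrict_zero B f)) ` ?S \<subseteq> ?T"
      using PAB_iff sum_union by (auto simp: LA_def LB_def sum_restrict_zero)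
    show "(\<lambda>(i, g, h) x. g x + h x) ` ?T \<subseteq> ?S"
    proof (rule image_subsetI)
      fix t assume "t \<in> ?T"
      then obtain i g h where t: "t = (i, g, h)" "i \<le> k"
        and g: "PA g" "sum g A = i" and h: "PB h" "sum h B = k - i"
        by (auto simp: LA_def LB_def)
      have "restrict_zero A (\<lambda>x. g x + h x) = g" "restrict_zero B (\<lambda>x. g x + h x) = h"
        using assms(3) vanish_A[OF g(1)] vanish_B[OF h(1)]
        by (auto simp: fun_eq_iff restrict_zero_def)
      then show "(\<lambda>(i, g, h) x. g x + h x) t \<in> ?S"
        using PAB_iff g h t sum_union vanish_A[OF g(1)] vanish_B[OF h(1)] by auto
    qed
  qed
  then have "card ?S = card ?T" by (rule bij_betw_same_card)
  also have "\<dots> = (\<Sum>i=0..k. card (LA i) * card (LB (k - i)))"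
    by (simp add: finite_LA finite_LB card_cartesian_product)
  finally show "fps_nth (size_gf (A \<union> B) PAB) k = fps_nth (size_gf A PA * size_gf B PB) k"
    by (simp add: size_gf_def fps_mult_nth LA_def LB_def)
qed

lemma RP_partition_vanishes: "RP_partition R le w f \<Longrightarrow> x \<notin> R \<Longrightarrow> f x = 0"
  by (simp add: RP_partition_def)

lemma RPs_partition_vanishes: "RPs_partition R le w s f \<Longrightarrow> x \<notin> R \<Longrightarrow> f x = 0"
  by (simp add: RPs_partition_def RP_partition_def)

lemma RPs_partition_shift_up_iff:
  assumes "s \<in> R" and "\<forall>x. x \<notin> R \<longrightarrow> g x = 0"
  shows "RPs_partition R le w s (shift_up R g) \<longleftrightarrow> RPs_partition R le w s g"
proof -
  have "\<forall>x\<in>R. shift_up R g x = g x + 1" "\<forall>x. x \<notin> R \<longrightarrow> shift_up R g x = 0"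
    by (simp_all add: shift_up_def restrict_zero_def)
  then show ?thesis
    using assms by (simp add: RPs_partition_def RP_partition_def)
qed

lemma RPs_partition_pos_eq_shift_up:
  assumes "s \<in> R"
  shows "{f. RPs_partition R le w s f \<and> 0 < f s} = shift_up R ` {g. RPs_partition R le w s g}"
proof
  show "shift_up R ` {g. RPs_partition R le w s g} \<subseteq> {f. RPs_partition R le w s f \<and> 0 < f s}"
  proof clarify
    fix g assume g: "RPs_partition R le w s g"
    have "\<forall>x. x \<notin> R \<longrightarrow> g x = 0"
      using RPs_partition_vanishes[OF g] by blast
    then have "RPs_partition R le w s (shift_up R g)"
      using RPs_partition_shift_up_iff[OF assms] g by blast
    then show "RPs_partition R le w s (shift_up R g) \<and> 0 < shift_up R g s"
      using assms by (simp add: shift_up_def restrict_zero_def)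
  qed
next
  show "{f. RPs_partition R le w s f \<and> 0 < f s} \<subseteq> shift_up R ` {g. RPs_partition R le w s g}"
  proof clarify
    fix f assume f: "RPs_partition R le w s f" "0 < f s"
    define g where "g = restrict_zero R (\<lambda>x. f x - 1)"
    have "\<forall>t\<in>R. 0 < f t"
      using f unfolding RPs_partition_def by (meson less_le_trans)
    then have "f = shift_up R g"
      using RPs_partition_vanishes[OF f(1)]
      by (auto simp: fun_eq_iff g_def shift_up_def restrict_zero_def)
    moreover have "\<forall>x. x \<notin> R \<longrightarrow> g x = 0"
      by (simp add: g_def restrict_zero_def)
    ultimately show "f \<in> shift_up R ` {g. RPs_partition R le w s g}"
      using f(1) RPs_partition_shift_up_iff[OF assms] by blast
  qed
qed

lemma Gs_gf_min_zero:
  assumes "finite R" "s \<in> R"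
  shows "(1 - fps_X ^ card R) * Gs_gf R le w s
    = size_gf R (\<lambda>f. RPs_partition R le w s f \<and> f s = 0)"
proof -
  have "Gs_gf R le w s = size_gf R (\<lambda>f. RPs_partition R le w s f \<and> f s = 0)
      + size_gf R (\<lambda>f. RPs_partition R le w s f \<and> \<not> f s = 0)"
    unfolding Gs_gf_def by (rule size_gf_split[OF assms(1)]) (rule RPs_partition_vanishes)
  also have "size_gf R (\<lambda>f. RPs_partition R le w s f \<and> \<not> f s = 0)
      = size_gf R (\<lambda>f. f \<in> shift_up R ` Collect (RPs_partition R le w s))"
    unfolding RPs_partition_pos_eq_shift_up[OF assms(2), symmetric] by simp
  also have "\<dots> = fps_X ^ card R * Gs_gf R le w s"
    unfolding Gs_gf_def by (rule size_gf_shift_up[OF assms(1)]) (rule RPs_partition_vanishes)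
  finally have "Gs_gf R le w s = size_gf R (\<lambda>f. RPs_partition R le w s f \<and> f s = 0)
      + fps_X ^ card R * Gs_gf R le w s" .
  then have "Gs_gf R le w s - fps_X ^ card R * Gs_gf R le w s
      = size_gf R (\<lambda>f. RPs_partition R le w s f \<and> f s = 0)"
    unfolding diff_eq_eq .
  then show ?thesis by (simp add: left_diff_distrib)
qed

lemma RP_partition_iff_pairs:
  assumes "le \<subseteq> R \<times> R"
  shows "RP_partition R le w f \<longleftrightarrow>
    (\<forall>x. x \<notin> R \<longrightarrow> f x = 0) \<and> (\<forall>(x, y)\<in>le. f y \<le> f x \<and> (w y < w x \<longrightarrow> f y < f x))"
  using assms unfolding RP_partition_def by blast

lemma RP_partition_disjoint_union_iff:
  assumes "P \<inter> Q = {}" "leP \<subseteq> P \<times> P" "leQ \<subseteq> Q \<times> Q"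
  shows "RP_partition (P \<union> Q) (leP \<union> leQ) w f \<longleftrightarrow>
    RP_partition P leP w (restrict_zero P f) \<and> RP_partition Q leQ w (restrict_zero Q f)
    \<and> (\<forall>x. x \<notin> P \<union> Q \<longrightarrow> f x = 0)"
proof -
  have union: "leP \<union> leQ \<subseteq> (P \<union> Q) \<times> (P \<union> Q)"
    using assms by blast
  show ?thesis
    unfolding RP_partition_iff_pairs[OF assms(2)] RP_partition_iff_pairs[OF assms(3)]
      RP_partition_iff_pairs[OF union]
    using assms by (auto 0 3 simp: restrict_zero_def split: if_splits)
qed

lemma RPs_partition_min_zero_iff:
  assumes "s \<in> R"
  shows "RPs_partition R le w s f \<and> f s = 0 \<longleftrightarrow>
    RP_partition R le w f \<and> f s = 0 \<and> (\<forall>t\<in>R. f t = 0 \<and> t \<noteq> s \<longrightarrow> w t < w s)"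
  using assms unfolding RPs_partition_def by auto

lemma Gs_gf_disjoint_union_min_zero:
  assumes "finite P" "finite Q" "P \<inter> Q = {}" "leP \<subseteq> P \<times> P" "leQ \<subseteq> Q \<times> Q"
    and "s \<in> P" and "\<forall>t\<in>Q. w s > w t"
  shows "size_gf (P \<union> Q) (\<lambda>f. RPs_partition (P \<union> Q) (leP \<union> leQ) w s f \<and> f s = 0)
    = size_gf P (\<lambda>g. RPs_partition P leP w s g \<and> g s = 0) * G_gf Q leQ w"
  unfolding G_gf_def
proof (rule size_gf_disjoint_union[OF assms(1-3)])
  show "\<And>g x. RPs_partition P leP w s g \<and> g s = 0 \<Longrightarrow> x \<notin> P \<Longrightarrow> g x = 0"
    by (rule RPs_partition_vanishes) (erule conjunct1)
  show "\<And>h x. RP_partition Q leQ w h \<Longrightarrow> x \<notin> Q \<Longrightarrow> h x = 0"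
    by (rule RP_partition_vanishes)
  fix f
  have s: "s \<in> P \<union> Q" using assms(6) by blast
  have at_s: "restrict_zero P f s = f s"
    using assms(6) by (simp add: restrict_zero_def)
  have min_P: "(\<forall>t\<in>P. restrict_zero P f t = 0 \<and> t \<noteq> s \<longrightarrow> w t < w s)
      \<longleftrightarrow> (\<forall>t\<in>P. f t = 0 \<and> t \<noteq> s \<longrightarrow> w t < w s)"
    by (simp add: restrict_zero_def)
  have min_PQ: "(\<forall>t\<in>P \<union> Q. f t = 0 \<and> t \<noteq> s \<longrightarrow> w t < w s)
      \<longleftrightarrow> (\<forall>t\<in>P. f t = 0 \<and> t \<noteq> s \<longrightarrow> w t < w s)"
    using assms(7) by blast
  show "(RPs_partition (P \<union> Q) (leP \<union> leQ) w s f \<and> f s = 0) \<longleftrightarrow>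
      (RPs_partition P leP w s (restrict_zero P f) \<and> restrict_zero P f s = 0)
      \<and> RP_partition Q leQ w (restrict_zero Q f) \<and> (\<forall>x. x \<notin> P \<union> Q \<longrightarrow> f x = 0)"
    unfolding RPs_partition_min_zero_iff[OF s] RPs_partition_min_zero_iff[OF assms(6)]
      RP_partition_disjoint_union_iff[OF assms(3-5)]
    unfolding min_P min_PQ at_s by blast
qed

theorem lemma3p4:
  fixes P Q :: "'a set" and leP leQ :: "('a \<times> 'a) set"
    and \<omega> :: "'a \<Rightarrow> int" and s :: 'a and n p :: nat
  assumes "finite P" and "finite Q" and "P \<inter> Q = {}"
    and "partial_order_on P leP" and "partial_order_on Q leQ"
    and "n = card (P \<union> Q)" and "p = card P"
    and "bij_betw \<omega> (P \<union> Q) {1..int n}"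
    and "s \<in> P" and "\<forall>t\<in>Q. \<omega> s > \<omega> t"
  shows "(1 - fps_X ^ n) * Gs_gf (P \<union> Q) (leP \<union> leQ) \<omega> s
         = (1 - fps_X ^ p) * Gs_gf P leP \<omega> s * G_gf Q leQ \<omega>"
proof -
  have "(1 - fps_X ^ n) * Gs_gf (P \<union> Q) (leP \<union> leQ) \<omega> s
      = size_gf (P \<union> Q) (\<lambda>f. RPs_partition (P \<union> Q) (leP \<union> leQ) \<omega> s f \<and> f s = 0)"
    unfolding \<open>n = card (P \<union> Q)\<close> using assms(1,2,9) by (intro Gs_gf_min_zero) auto
  also have "\<dots> = size_gf P (\<lambda>g. RPs_partition P leP \<omega> s g \<and> g s = 0) * G_gf Q leQ \<omega>"
    using partial_order_onD(4)[OF assms(4)] partial_order_onD(4)[OF assms(5)]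
    by (rule Gs_gf_disjoint_union_min_zero[OF assms(1-3) _ _ assms(9,10)])
  also have "\<dots> = (1 - fps_X ^ p) * Gs_gf P leP \<omega> s * G_gf Q leQ \<omega>"
    unfolding \<open>p = card P\<close> using Gs_gf_min_zero[OF assms(1,9)] by simp
  finally show ?thesis .
qed

end
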